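(* Let $0<r<1$ and $0\le\phi\le\pi/2$, and let $\{\rho_{\theta(\eta)}:\eta\in H\subset\mathbb{R}^2\}$ be a two-parameter smooth submodel of the full qubit model such that at some $\eta_0$ one has $\rho_{\theta(\eta_0)}=\rho_{(0,0,r)}$ and $$D_1:=\partial_{\eta^1}\rho_{\theta(\eta)}\big|_{\eta_0}=\sigma_1,\qquad D_2:=\partial_{\eta^2}\rho_{\theta(\eta)}\big|_{\eta_0}=\cos\phi\,\sigma_2+\sin\phi\sqrt{1-r^2}\,\sigma_3 .$$ Let $G=\begin{pmatrix}g_1&g_2\\ g_2&g_3\end{pmatrix}$ be real symmetric positive definite. Then the Holevo bound of this submodel at $\eta_0$ is $$C^H(G)=\mathrm{tr}\,G+2r\cos\phi\sqrt{\det G}-r^2\sin^2\phi\,g_1\qquad\text{if } r\,g_1\sin^2\phi<\sqrt{\det G}\cos\phi,$$ and $$C^H(G)=\mathrm{tr}\,G+\frac{\det G}{g_1}\Big(\frac{\cos\phi}{\sin\phi}\Big)^2\qquad\text{otherwise}.$$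
   Context: Full qubit model: $\rho_\theta=\frac12I+\sum_{i=1}^3\theta^i\sigma_i$ on $\mathbb{C}^2$, $\|\theta\|<1$, with $\sigma_1=\frac12\begin{pmatrix}0&1\\1&0\end{pmatrix}$, $\sigma_2=\frac12\begin{pmatrix}0&-i\\i&0\end{pmatrix}$, $\sigma_3=\frac12\begin{pmatrix}1&0\\0&-1\end{pmatrix}$. For a pair $\vec X=(X^1,X^2)$ of Hermitian $2\times2$ matrices, $Z^{k,j}(\vec X)=\mathrm{Tr}\,\rho_{(0,0,r)}X^kX^j$ and $C(G,\vec X)=\mathrm{tr}\sqrt G\,\mathrm{Re}Z(\vec X)\sqrt G+\mathrm{tr}|\sqrt G\,\mathrm{Im}Z(\vec X)\sqrt G|$, where $\mathrm{Re}W=(W+\bar W)/2$, $\mathrm{Im}W=(W-\bar W)/(2i)$, $|A|=(A^*A)^{1/2}$. The Holevo bound of the submodel at $\eta_0$ is $C^H(G)=\min\{C(G,\vec X):\mathrm{Tr}\,D_kX^j=\delta^j_k,\ j,k=1,2\}$. *)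

theory Defs
  imports "HOL-Analysis.Analysis"
begin

type_synonym cmat = "complex^2^2"
type_synonym rmat = "real^2^2"

definition cscale :: "complex \<Rightarrow> cmat \<Rightarrow> cmat" where
  "cscale c A = (\<chi> i j. c * A$i$j)"

definition cadj :: "cmat \<Rightarrow> cmat" where
  "cadj A = (\<chi> i j. cnj (A$j$i))"

definition hermitian :: "cmat \<Rightarrow> bool" where
  "hermitian A \<longleftrightarrow> cadj A = A"

text \<open>The (halved) Pauli matrices sigma_1, sigma_2, sigma_3.\<close>
definition sigma :: "3 \<Rightarrow> cmat" where
  "sigma i = (if i = 1 then vector [vector [0, 1/2], vector [1/2, 0]]
              else if i = 2 then vector [vector [0, -\<i>/2], vector [\<i>/2, 0]]
              else vector [vector [1/2, 0], vector [0, -1/2]])"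

definition rho :: "real^3 \<Rightarrow> cmat" where
  "rho \<theta> = cscale (1/2) (mat 1) + (\<Sum>i\<in>UNIV. (\<theta>$i) *\<^sub>R sigma i)"

definition rpsd :: "rmat \<Rightarrow> bool" where
  "rpsd S \<longleftrightarrow> transpose S = S \<and> (\<forall>x. 0 \<le> x \<bullet> (S *v x))"

definition rpd :: "rmat \<Rightarrow> bool" where
  "rpd S \<longleftrightarrow> transpose S = S \<and> (\<forall>x. x \<noteq> 0 \<longrightarrow> 0 < x \<bullet> (S *v x))"

definition msqrt :: "rmat \<Rightarrow> rmat" where
  "msqrt A = (THE S. rpsd S \<and> S ** S = A)"

text \<open>Matrix absolute value |A| = (A^* A)^{1/2} (A real, so A^* = A^T).\<close>
definition mabs :: "rmat \<Rightarrow> rmat" where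
  "mabs A = msqrt (transpose A ** A)"

definition Zmat :: "real \<Rightarrow> (2 \<Rightarrow> cmat) \<Rightarrow> complex^2^2" where
  "Zmat r X = (\<chi> k j. trace (rho (vector [0, 0, r]) ** X k ** X j))"

definition ReM :: "complex^2^2 \<Rightarrow> rmat" where
  "ReM W = (\<chi> k j. Re (W$k$j))"

definition ImM :: "complex^2^2 \<Rightarrow> rmat" where
  "ImM W = (\<chi> k j. Im (W$k$j))"

definition holevoC :: "real \<Rightarrow> rmat \<Rightarrow> (2 \<Rightarrow> cmat) \<Rightarrow> real" where
  "holevoC r G X =
     trace (msqrt G ** ReM (Zmat r X) ** msqrt G)
   + trace (mabs (msqrt G ** ImM (Zmat r X) ** msqrt G))"

definition admissible :: "(2 \<Rightarrow> cmat) \<Rightarrow> (2 \<Rightarrow> cmat) \<Rightarrow> bool" where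
  "admissible D X \<longleftrightarrow> (\<forall>j. hermitian (X j)) \<and>
     (\<forall>j k. trace (D k ** X j) = (if j = k then 1 else 0))"

text \<open>v is the Holevo bound C^H(G) = min { C(G,X) : X admissible }:
  the minimum exists and equals v.\<close>
definition is_holevo_bound :: "real \<Rightarrow> (2 \<Rightarrow> cmat) \<Rightarrow> rmat \<Rightarrow> real \<Rightarrow> bool" where
  "is_holevo_bound r D G v \<longleftrightarrow>
     (\<exists>X. admissible D X \<and> holevoC r G X = v) \<and>
     (\<forall>X. admissible D X \<longrightarrow> v \<le> holevoC r G X)"

end

(*
  Write each Hermitian X^j as [[a_j, u_j + i v_j], [u_j - i v_j, b_j]]. Then Re Z(X) is the Gram
  matrix of four vectors m, W, u, v in R^2, and Im Z(X) is skew with off-diagonal entry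
  r (v_1 u_2 - u_1 v_2). For 2x2 matrices S J S = det S J when J is skew and S symmetric, so
  C(G, X) = m'Gm + W'GW + u'Gu + v'Gv + 2 r |v_1 u_2 - u_1 v_2| sqrt (det G).
  The constraints Tr D_k X^j = delta force u = e_1 and, after rotating the pair (W, v) by the
  angle phi, fix one rotated component to e_2 (contributing g_3) while the other one, B, is free.
  As v_2 = sin phi B_2 - cos phi, this gives
  C(G, X) = tr G + m'Gm + B'GB + 2 r sqrt (det G) |sin phi B_2 - cos phi|.
  Minimising over m and B_1 leaves min_y (det G / g_1) y^2 + 2 r sqrt (det G) |y sin phi - cos phi|,
  attained in the interior or at the kink y = cot phi according to the stated condition.
*)

theory Submission
  imports Defs
begin

lemma mat2_eq_iff:
  "(A::'a^2^2) = B \<longleftrightarrow> A$1$1 = B$1$1 \<and> A$1$2 = B$1$2 \<and> A$2$1 = B$2$1 \<and> A$2$2 = B$2$2"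
  by (auto simp: vec_eq_iff forall_2)

lemma matrix_mult_2_nth: "((A::'a::semiring_1^2^2) ** B)$i$j = A$i$1 * B$1$j + A$i$2 * B$2$j"
  by (simp add: matrix_matrix_mult_def sum_2)

lemma trace_2: "trace (A::'a::semiring_1^2^2) = A$1$1 + A$2$2"
  by (simp add: trace_def sum_2)

lemma mat_2_nth: "(mat c :: 'a::zero^2^2)$1$1 = c" "(mat c :: 'a::zero^2^2)$1$2 = 0"
    "(mat c :: 'a::zero^2^2)$2$1 = 0" "(mat c :: 'a::zero^2^2)$2$2 = c"
  by (simp_all add: mat_def)

lemma cayley_hamilton_2: "(S::real^2^2) ** S = trace S *\<^sub>R S - mat (det S)"
  by (simp add: mat2_eq_iff matrix_mult_2_nth trace_2 det_2 mat_2_nth algebra_simps)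

lemma inner_mult_2: "(x::real^2) \<bullet> (S *v x) = S$1$1 * x$1 * x$1 + (S$1$2 + S$2$1) * x$1 * x$2 + S$2$2 * x$2 * x$2"
  by (simp add: inner_vec_def sum_2 matrix_vector_mult_def algebra_simps)

lemma rpsd_2_entries:
  assumes "rpsd S"
  shows "S$2$1 = S$1$2" "0 \<le> S$1$1" "0 \<le> S$2$2" "0 \<le> det S"
proof -
  have t: "transpose S = S" and q: "\<And>x. 0 \<le> x \<bullet> (S *v x)" using assms by (auto simp: rpsd_def)
  have "(transpose S)$1$2 = S$1$2" using t by simp
  then show sym: "S$2$1 = S$1$2" by (simp add: transpose_def)
  show a: "0 \<le> S$1$1" using q[of "vector [1, 0]"] by (simp add: inner_mult_2)
  show e: "0 \<le> S$2$2" using q[of "vector [0, 1]"] by (simp add: inner_mult_2)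
  show "0 \<le> det S"
  proof (cases "S$1$1 = 0")
    case True
    have "0 \<le> - (S$1$2 * S$1$2) * (S$2$2 + 2)"
      using q[of "vector [-(S$2$2 + 1), S$1$2]"] True sym by (simp add: inner_mult_2 algebra_simps)
    then have "S$1$2 = 0" using e by (auto simp: mult_le_0_iff)
    then show ?thesis using True by (simp add: det_2)
  next
    case False
    have "0 \<le> S$1$1 * det S"
      using q[of "vector [S$1$2, -S$1$1]"] sym by (simp add: inner_mult_2 det_2 algebra_simps)
    then show ?thesis using a False by (simp add: zero_le_mult_iff)
  qed
qed

lemma rpsd_2I:
  assumes sym: "S$2$1 = S$1$2" and a: "0 \<le> S$1$1" and e: "0 \<le> S$2$2" and d: "0 \<le> det S"
  shows "rpsd S"
  unfolding rpsd_def
proof (intro conjI allI)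
  show "transpose S = S" using sym by (simp add: mat2_eq_iff transpose_def)
  fix x :: "real^2"
  have q: "x \<bullet> (S *v x) = S$1$1 * x$1 * x$1 + 2 * S$1$2 * x$1 * x$2 + S$2$2 * x$2 * x$2"
    using sym by (simp add: inner_mult_2)
  show "0 \<le> x \<bullet> (S *v x)"
  proof (cases "S$1$1 = 0")
    case True
    then have "S$1$2 = 0" using d sym by (auto simp: det_2 mult_le_0_iff)
    then show ?thesis using True q e by (simp add: mult.assoc)
  next
    case False
    have "S$1$1 * (x \<bullet> (S *v x)) = (S$1$1 * x$1 + S$1$2 * x$2)\<^sup>2 + det S * (x$2)\<^sup>2"
      using sym unfolding q by (simp add: det_2 algebra_simps power2_eq_square)
    also have "\<dots> \<ge> 0" using d by simp
    finally show ?thesis using a False by (simp add: zero_le_mult_iff)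
  qed
qed

lemma rpd_2_entries:
  assumes "rpd G"
  shows "0 < G$1$1" "0 < det G"
proof -
  have t: "transpose G = G" and q: "\<And>x. x \<noteq> 0 \<Longrightarrow> 0 < x \<bullet> (G *v x)" using assms by (auto simp: rpd_def)
  have "(transpose G)$1$2 = G$1$2" using t by simp
  then have sym: "G$2$1 = G$1$2" by (simp add: transpose_def)
  have "vector [1, 0] \<noteq> (0::real^2)" by (metis vector_2(1) zero_index zero_neq_one)
  from q[OF this] show a: "0 < G$1$1" by (simp add: inner_mult_2)
  have "vector [G$1$2, -G$1$1] \<noteq> (0::real^2)" using a by (metis vector_2(2) zero_index neg_equal_0_iff_equal less_irrefl)
  from q[OF this] have "0 < G$1$1 * det G" using sym by (simp add: inner_mult_2 det_2 algebra_simps)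
  then show "0 < det G" using a by (simp add: zero_less_mult_iff)
qed

lemma rpd_imp_rpsd: "rpd G \<Longrightarrow> rpsd G"
  unfolding rpd_def rpsd_def by (metis order_le_less inner_zero_left)

lemma rpsd_sqrt_eq_formula:
  assumes S: "rpsd S" and sq: "S ** S = A"
  shows "S = (1 / sqrt (trace A + 2 * sqrt (det A))) *\<^sub>R (A + mat (sqrt (det A)))"
proof -
  note S_entries = rpsd_2_entries[OF S]
  have "det A = (det S)\<^sup>2" using sq det_mul by (metis power2_eq_square)
  then have sqrt_det: "sqrt (det A) = det S" using S_entries by simp
  have "trace A = (trace S)\<^sup>2 - 2 * det S"
    using sq[symmetric] S_entries(1) by (simp add: trace_2 det_2 matrix_mult_2_nth power2_eq_square algebra_simps)
  then have sqrt_tr: "sqrt (trace A + 2 * det S) = trace S"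
    using sqrt_det S_entries by (simp add: trace_2)
  have ch: "A + mat (det S) = trace S *\<^sub>R S" using cayley_hamilton_2[of S] sq by simp
  show ?thesis
  proof (cases "trace S = 0")
    case True
    \<comment> \<open>then S = 0, and so is the right-hand side since 1 / 0 = 0\<close>
    then have "S$1$1 = 0" "S$2$2 = 0" using S_entries by (auto simp: trace_2)
    then have "S$1$2 = 0" using S_entries by (auto simp: det_2 mult_le_0_iff)
    then have "S = 0" using \<open>S$1$1 = 0\<close> \<open>S$2$2 = 0\<close> S_entries by (simp add: mat2_eq_iff)
    then show ?thesis using True sqrt_det sqrt_tr by simp
  next
    case False
    then show ?thesis by (simp add: sqrt_det sqrt_tr ch)
  qed
qed

lemma msqrt_eq:
  assumes "rpsd S" "S ** S = A"
  shows "msqrt A = S"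
  unfolding msqrt_def
proof (rule the_equality)
  show "rpsd S \<and> S ** S = A" using assms by simp
  show "T = S" if "rpsd T \<and> T ** T = A" for T
    using that assms rpsd_sqrt_eq_formula by metis
qed

lemma msqrt_rpsd:
  assumes A: "rpsd A"
  shows "rpsd (msqrt A)" "msqrt A ** msqrt A = A"
proof -
  note A_entries = rpsd_2_entries[OF A]
  define \<delta> where "\<delta> = sqrt (det A)"
  define \<tau> where "\<tau> = sqrt (trace A + 2 * \<delta>)"
  define S where "S = (1 / \<tau>) *\<^sub>R (A + mat \<delta>)"
  have \<delta>: "0 \<le> \<delta>" "\<delta> * \<delta> = A$1$1 * A$2$2 - A$1$2 * A$1$2"
    using A_entries by (auto simp: \<delta>_def det_2)
  have \<tau>: "0 \<le> \<tau>" "\<tau> * \<tau> = A$1$1 + A$2$2 + 2 * \<delta>"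
    using A_entries \<delta> by (auto simp: \<tau>_def trace_2)
  have "rpsd S"
  proof (rule rpsd_2I)
    have "det S = (1 / \<tau>)\<^sup>2 * det (A + mat \<delta>)"
      by (cases "\<tau> = 0") (simp_all add: S_def det_2 mat_2_nth power2_eq_square field_simps)
    moreover have "det (A + mat \<delta>) = 2 * (\<delta> * \<delta>) + \<delta> * (A$1$1 + A$2$2)"
      using \<delta> A_entries(1) by (simp add: det_2 mat_2_nth algebra_simps)
    moreover have "0 \<le> 2 * (\<delta> * \<delta>) + \<delta> * (A$1$1 + A$2$2)"
      using \<delta>(1) A_entries(2,3) by simp
    ultimately show "0 \<le> det S" by simp
  qed (use A_entries \<delta> \<tau> in \<open>simp_all add: S_def mat_2_nth\<close>)
  moreover have "S ** S = A"
  proof (cases "\<tau> = 0")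
    case True
    then have "A$1$1 = 0" "A$2$2 = 0" "\<delta> = 0" using A_entries \<delta> \<tau> by auto
    then have "A = 0" using A_entries \<delta> by (auto simp: mat2_eq_iff)
    then show ?thesis using True by (simp add: S_def)
  next
    case False
    have "(A + mat \<delta>) ** (A + mat \<delta>) = (\<tau> * \<tau>) *\<^sub>R A"
      using \<delta>(2) \<tau>(2) A_entries(1)
      by (simp add: mat2_eq_iff matrix_mult_2_nth mat_2_nth) (simp add: algebra_simps)
    moreover have "S ** S = (1 / \<tau>)\<^sup>2 *\<^sub>R ((A + mat \<delta>) ** (A + mat \<delta>))"
      by (simp add: S_def matrix_scalar_ac scalar_matrix_assoc[symmetric] power2_eq_square)
    ultimately show ?thesis
      using False by (simp add: power2_eq_square)
  qed
  ultimately show "rpsd (msqrt A)" "msqrt A ** msqrt A = A" using msqrt_eq by auto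
qed

definition skew2 :: "real \<Rightarrow> rmat" where
  "skew2 k = vector [vector [0, k], vector [-k, 0]]"

lemma skew2_congruence: "S$2$1 = S$1$2 \<Longrightarrow> S ** skew2 k ** S = skew2 (k * det S)"
  by (simp add: skew2_def mat2_eq_iff matrix_mult_2_nth det_2 algebra_simps)

lemma mabs_skew2: "mabs (skew2 k) = mat \<bar>k\<bar>"
proof -
  have "transpose (skew2 k) ** skew2 k = mat \<bar>k\<bar> ** mat \<bar>k\<bar>"
    by (simp add: skew2_def mat2_eq_iff matrix_mult_2_nth transpose_def mat_2_nth abs_mult_self_eq)
  moreover have "rpsd (mat \<bar>k\<bar>)" by (rule rpsd_2I) (simp_all add: mat_2_nth det_2)
  ultimately show ?thesis unfolding mabs_def using msqrt_eq by metis
qed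

lemma holevoC_skew:
  assumes G: "rpsd G" and Im: "ImM (Zmat r X) = skew2 k"
  shows "holevoC r G X = trace (G ** ReM (Zmat r X)) + 2 * \<bar>k\<bar> * sqrt (det G)"
proof -
  let ?S = "msqrt G"
  have S: "rpsd ?S" "?S ** ?S = G" using msqrt_rpsd[OF G] by auto
  have "trace (?S ** R ** ?S) = trace (G ** R)" for R :: rmat
    using S(2) by (metis trace_mul_sym matrix_mul_assoc)
  moreover have "sqrt (det G) = \<bar>det ?S\<bar>"
    using S(2) det_mul by (metis real_sqrt_abs2)
  moreover have "trace (mabs (?S ** skew2 k ** ?S)) = 2 * \<bar>k * det ?S\<bar>"
    using skew2_congruence[OF rpsd_2_entries(1)[OF S(1)]] by (simp add: mabs_skew2 trace_2 mat_2_nth)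
  ultimately show ?thesis unfolding holevoC_def Im by (simp add: abs_mult)
qed

definition qform :: "real^'n^'n \<Rightarrow> ('n \<Rightarrow> real) \<Rightarrow> real" where
  "qform G x = (\<Sum>k\<in>UNIV. \<Sum>j\<in>UNIV. G$k$j * x k * x j)"

definition outer :: "('n \<Rightarrow> real) \<Rightarrow> real^'n^'n" where
  "outer x = (\<chi> k j. x k * x j)"

lemma trace_mult_outer: "trace (G ** outer x) = qform G x"
  by (simp add: trace_def matrix_matrix_mult_def outer_def qform_def mult_ac)

lemma qform_nonneg:
  assumes "rpsd G"
  shows "0 \<le> qform G x"
proof -
  have "qform G x = (\<chi> j. x j) \<bullet> (G *v (\<chi> j. x j))"
    by (simp add: qform_def inner_vec_def matrix_vector_mult_def sum_distrib_left mult_ac)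
  then show ?thesis using assms by (simp add: rpsd_def)
qed

lemma qform_rotation:
  assumes "c\<^sup>2 + s\<^sup>2 = 1"
  shows "qform G (\<lambda>j. c * x j + s * y j) + qform G (\<lambda>j. s * x j - c * y j) = qform G x + qform G y"
proof -
  have "G$k$j * (c * x k + s * y k) * (c * x j + s * y j) + G$k$j * (s * x k - c * y k) * (s * x j - c * y j)
      = (c\<^sup>2 + s\<^sup>2) * (G$k$j * x k * x j + G$k$j * y k * y j)" for k j
    by (simp add: algebra_simps power2_eq_square)
  then show ?thesis
    using assms by (simp add: qform_def sum.distrib[symmetric])
qed

lemma qform_2: "qform (G::real^2^2) x = G$1$1 * (x 1)\<^sup>2 + (G$1$2 + G$2$1) * x 1 * x 2 + G$2$2 * (x 2)\<^sup>2"
  by (simp add: qform_def sum_2 algebra_simps power2_eq_square)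

lemma qform_2_complete_square:
  "(G::real^2^2)$2$1 = G$1$2 \<Longrightarrow> G$1$1 * qform G x = (G$1$1 * x 1 + G$1$2 * x 2)\<^sup>2 + det G * (x 2)\<^sup>2"
  by (simp add: qform_2 det_2 algebra_simps power2_eq_square)

definition hmat :: "real \<Rightarrow> real \<Rightarrow> real \<Rightarrow> real \<Rightarrow> cmat" where
  "hmat a b u v = vector [vector [of_real a, Complex u v], vector [Complex u (- v), of_real b]]"

lemma hermitian_hmat: "hermitian (hmat a b u v)"
  unfolding hermitian_def by (simp add: mat2_eq_iff cadj_def hmat_def complex_eq_iff)

lemma hermitian_eq_hmat:
  assumes "hermitian A"
  shows "A = hmat (Re (A$1$1)) (Re (A$2$2)) (Re (A$1$2)) (Im (A$1$2))"
proof -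
  have "cnj (A$j$i) = A$i$j" for i j
    using arg_cong[OF assms[unfolded hermitian_def], of "\<lambda>M. M$i$j"] by (simp add: cadj_def)
  from this[of 1 1] this[of 2 2] this[of 1 2] show ?thesis
    by (simp add: hmat_def mat2_eq_iff complex_eq_iff)
qed

lemma hermitian_family_eq_hmat:
  assumes "\<forall>j. hermitian (X j)"
  shows "\<exists>a b u v. X = (\<lambda>j. hmat (a j) (b j) (u j) (v j))"
proof -
  have "X = (\<lambda>j. hmat (Re (X j$1$1)) (Re (X j$2$2)) (Re (X j$1$2)) (Im (X j$1$2)))"
    by (rule ext) (use assms hermitian_eq_hmat in blast)
  then show ?thesis by (intro exI)
qed

lemma trace_sigma_hmat:
  "trace (sigma 1 ** hmat a b u v) = of_real u"
  "trace ((c *\<^sub>R sigma 2 + t *\<^sub>R sigma 3) ** hmat a b u v) = of_real (t * (a - b) / 2 - c * v)"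
  by (simp_all add: sigma_def hmat_def trace_2 matrix_mult_2_nth complex_eq_iff algebra_simps)

lemma admissible_hmat_iff:
  assumes "D 1 = sigma 1" "D 2 = c *\<^sub>R sigma 2 + t *\<^sub>R sigma 3"
  shows "admissible D (\<lambda>j. hmat (a j) (b j) (u j) (v j)) \<longleftrightarrow>
    u 1 = 1 \<and> u 2 = 0 \<and> t * (a 1 - b 1) / 2 - c * v 1 = 0 \<and> t * (a 2 - b 2) / 2 - c * v 2 = 1"
  unfolding admissible_def using assms
  by (auto simp: forall_2 hermitian_hmat trace_sigma_hmat simp del: of_real_diff of_real_mult of_real_divide)

lemma rho_diag: "rho (vector [0, 0, r]) = vector [vector [of_real ((1 + r) / 2), 0], vector [0, of_real ((1 - r) / 2)]]"
  by (simp add: mat2_eq_iff rho_def sum_3 cscale_def sigma_def mat_def complex_eq_iff field_simps)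

lemma Zmat_hmat:
  "Zmat r (\<lambda>j. hmat (a j) (b j) (u j) (v j)) $k$j =
     Complex ((1 + r) / 2 * a k * a j + (1 - r) / 2 * b k * b j + u k * u j + v k * v j)
             (r * (v k * u j - u k * v j))"
  by (simp add: Zmat_def rho_diag hmat_def trace_2 matrix_mult_2_nth complex_eq_iff field_simps)

lemma ImM_Zmat_hmat:
  "ImM (Zmat r (\<lambda>j. hmat (a j) (b j) (u j) (v j))) = skew2 (r * (v 1 * u 2 - u 1 * v 2))"
  by (simp add: ImM_def Zmat_hmat skew2_def mat2_eq_iff algebra_simps)

lemma ReM_Zmat_hmat:
  assumes "\<sigma>\<^sup>2 = 1 - r\<^sup>2"
  shows "ReM (Zmat r (\<lambda>j. hmat (a j) (b j) (u j) (v j))) =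
    outer (\<lambda>j. (a j + b j) / 2 + r * (a j - b j) / 2) + outer (\<lambda>j. \<sigma> * (a j - b j) / 2) + outer u + outer v"
proof -
  have W: "outer (\<lambda>j. \<sigma> * (a j - b j) / 2) = (\<chi> k j. (1 - r\<^sup>2) * (a k - b k) * (a j - b j) / 4)"
    unfolding outer_def assms[symmetric] by (simp add: power2_eq_square mult_ac)
  show ?thesis
    unfolding W by (simp add: vec_eq_iff ReM_def Zmat_hmat outer_def) (simp add: field_simps power2_eq_square)
qed

lemma holevoC_hmat:
  assumes G: "rpsd G" and r: "0 \<le> r" and \<sigma>: "\<sigma>\<^sup>2 = 1 - r\<^sup>2"
  shows "holevoC r G (\<lambda>j. hmat (a j) (b j) (u j) (v j)) =
    qform G (\<lambda>j. (a j + b j) / 2 + r * (a j - b j) / 2) + qform G (\<lambda>j. \<sigma> * (a j - b j) / 2)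
    + qform G u + qform G v + 2 * r * \<bar>v 1 * u 2 - u 1 * v 2\<bar> * sqrt (det G)"
  using holevoC_skew[OF G ImM_Zmat_hmat] r
  by (simp add: ReM_Zmat_hmat[OF \<sigma>] matrix_add_ldistrib trace_add trace_mult_outer abs_mult)

lemma holevoC_constrained:
  fixes W B :: "2 \<Rightarrow> real"
  assumes G: "rpsd G" and r: "0 \<le> r" and \<sigma>: "\<sigma>\<^sup>2 = 1 - r\<^sup>2" and cs: "c\<^sup>2 + s\<^sup>2 = 1"
    and u: "u 1 = 1" "u 2 = 0"
    and W: "W = (\<lambda>j. \<sigma> * (a j - b j) / 2)" and B: "B = (\<lambda>j. c * W j + s * v j)"
    and constr: "s * W 1 - c * v 1 = 0" "s * W 2 - c * v 2 = 1"
  shows "holevoC r G (\<lambda>j. hmat (a j) (b j) (u j) (v j)) =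
    G$1$1 + G$2$2 + qform G (\<lambda>j. (a j + b j) / 2 + r * (a j - b j) / 2) + qform G B
    + 2 * r * \<bar>s * B 2 - c\<bar> * sqrt (det G)"
proof -
  have "qform G W + qform G v = qform G B + qform G (\<lambda>j. s * W j - c * v j)"
    using qform_rotation[OF cs, of G W v] B by simp
  moreover have "qform G (\<lambda>j. s * W j - c * v j) = G$2$2" using constr by (simp add: qform_2)
  moreover have "qform G u = G$1$1" using u by (simp add: qform_2)
  moreover have "v 2 = s * B 2 - c"
  proof -
    have "s * B 2 - c = s * (c * W 2 + s * v 2) - c * (s * W 2 - c * v 2)" using B constr(2) by simp
    also have "\<dots> = (c\<^sup>2 + s\<^sup>2) * v 2" by (simp add: algebra_simps power2_eq_square)
    finally show ?thesis using cs by simp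
  qed
  ultimately show ?thesis
    using holevoC_hmat[OF G r \<sigma>, of a b u v] u W by (simp add: abs_minus_commute)
qed

lemma holevoC_admissible:
  assumes G: "rpsd G" and r: "0 \<le> r" "r < 1" and cs: "c\<^sup>2 + s\<^sup>2 = 1"
    and D: "D 1 = sigma 1" "D 2 = c *\<^sub>R sigma 2 + (s * sqrt (1 - r\<^sup>2)) *\<^sub>R sigma 3"
    and adm: "admissible D X"
  shows "\<exists>m B. holevoC r G X = G$1$1 + G$2$2 + qform G m + qform G B + 2 * r * \<bar>s * B 2 - c\<bar> * sqrt (det G)"
proof -
  define \<sigma> where "\<sigma> = sqrt (1 - r\<^sup>2)"
  have \<sigma>: "\<sigma>\<^sup>2 = 1 - r\<^sup>2" using r by (simp add: \<sigma>_def power_le_one)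
  obtain a b u v where X: "X = (\<lambda>j. hmat (a j) (b j) (u j) (v j))"
    using hermitian_family_eq_hmat adm unfolding admissible_def by blast
  define W where "W = (\<lambda>j. \<sigma> * (a j - b j) / 2)"
  have "u 1 = 1" "u 2 = 0" "s * W 1 - c * v 1 = 0" "s * W 2 - c * v 2 = 1"
    using adm unfolding X admissible_hmat_iff[OF D[folded \<sigma>_def]] by (simp_all add: W_def mult.assoc)
  from holevoC_constrained[OF G r(1) \<sigma> cs this(1,2) W_def refl this(3,4)] show ?thesis
    unfolding X by blast
qed

lemma holevoC_attains:
  assumes G: "rpsd G" and r: "0 \<le> r" "r < 1" and cs: "c\<^sup>2 + s\<^sup>2 = 1"
    and D: "D 1 = sigma 1" "D 2 = c *\<^sub>R sigma 2 + (s * sqrt (1 - r\<^sup>2)) *\<^sub>R sigma 3"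
  shows "\<exists>X. admissible D X \<and> holevoC r G X = G$1$1 + G$2$2 + qform G B + 2 * r * \<bar>s * B 2 - c\<bar> * sqrt (det G)"
proof -
  define \<sigma> where "\<sigma> = sqrt (1 - r\<^sup>2)"
  have \<sigma>: "\<sigma>\<^sup>2 = 1 - r\<^sup>2" "0 < \<sigma>" using r by (simp_all add: \<sigma>_def power_le_one power_less_one_iff)
  \<comment> \<open>undo the rotation of holevoC_constrained for (B, e_2), and choose a, b with m = 0\<close>
  define W where "W = (\<lambda>j::2. c * B j + (if j = 1 then 0 else s))"
  define v where "v = (\<lambda>j::2. s * B j - (if j = 1 then 0 else c))"
  define u where "u = (\<lambda>j::2. if j = 1 then 1 else (0::real))"
  define a where "a = (\<lambda>j. (1 - r) * W j / \<sigma>)"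
  define b where "b = (\<lambda>j. - (1 + r) * W j / \<sigma>)"
  have W_ab: "W = (\<lambda>j. \<sigma> * (a j - b j) / 2)" using \<sigma>(2) by (simp add: fun_eq_iff a_def b_def field_simps)
  have B_Wv: "B = (\<lambda>j. c * W j + s * v j)"
  proof
    fix j
    have "c * W j + s * v j = (c\<^sup>2 + s\<^sup>2) * B j" by (simp add: W_def v_def algebra_simps power2_eq_square)
    then show "B j = c * W j + s * v j" using cs by simp
  qed
  have constr: "s * W 1 - c * v 1 = 0" "s * W 2 - c * v 2 = 1"
    using cs by (simp_all add: W_def v_def algebra_simps power2_eq_square)
  have "admissible D (\<lambda>j. hmat (a j) (b j) (u j) (v j))"
    using constr unfolding admissible_hmat_iff[OF D[folded \<sigma>_def]] W_ab by (simp add: u_def mult.assoc)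
  moreover have "(\<lambda>j. (a j + b j) / 2 + r * (a j - b j) / 2) = (\<lambda>j. 0)"
    using \<sigma>(2) by (simp add: fun_eq_iff a_def b_def field_simps)
  moreover have "qform G (\<lambda>j. 0) = 0" by (simp add: qform_def)
  ultimately show ?thesis
    using holevoC_constrained[OF G r(1) \<sigma>(1) cs _ _ W_ab B_Wv constr] by (auto simp: u_def)
qed

definition holevo_excess :: "real \<Rightarrow> real \<Rightarrow> real \<Rightarrow> real \<Rightarrow> real \<Rightarrow> real" where
  "holevo_excess r g d c s =
     (if r * g * s\<^sup>2 < d * c then 2 * r * c * d - r\<^sup>2 * s\<^sup>2 * g else d\<^sup>2 / g * (c / s)\<^sup>2)"

lemma kink_inequality:
  fixes g d r c s y :: real
  assumes g: "0 < g" and d: "0 < d" and r: "0 \<le> r" and c: "0 \<le> c" and kink: "d * c \<le> r * g * s\<^sup>2"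
  shows "d\<^sup>2 * c\<^sup>2 \<le> d\<^sup>2 * (s * y)\<^sup>2 + 2 * r * d * g * s\<^sup>2 * \<bar>s * y - c\<bar>"
proof (cases "c \<le> s * y")
  case True
  then have "d\<^sup>2 * c\<^sup>2 \<le> d\<^sup>2 * (s * y)\<^sup>2" using c by (intro mult_left_mono power_mono) auto
  moreover have "0 \<le> 2 * r * d * g * s\<^sup>2 * \<bar>s * y - c\<bar>" using r d g by simp
  ultimately show ?thesis by linarith
next
  case False
  define z where "z = c - s * y"
  have "d\<^sup>2 * (s * y)\<^sup>2 + 2 * r * d * g * s\<^sup>2 * \<bar>s * y - c\<bar> - d\<^sup>2 * c\<^sup>2
      = d\<^sup>2 * z\<^sup>2 + 2 * d * z * (r * g * s\<^sup>2 - d * c)"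
    using False by (simp add: z_def abs_if algebra_simps power2_eq_square)
  moreover have "0 \<le> 2 * d * z * (r * g * s\<^sup>2 - d * c)"
    using kink False d by (simp add: z_def)
  moreover have "0 \<le> d\<^sup>2 * z\<^sup>2" by simp
  ultimately show ?thesis by linarith
qed

lemma holevo_excess_le:
  assumes g: "0 < g" and d: "0 < d" and r: "0 \<le> r" and c: "0 \<le> c" and s: "0 \<le> s"
  shows "holevo_excess r g d c s \<le> d\<^sup>2 * y\<^sup>2 / g + 2 * r * \<bar>s * y - c\<bar> * d"
proof (cases "r * g * s\<^sup>2 < d * c")
  case True
  have "2 * r * (c - s * y) * d \<le> 2 * r * \<bar>s * y - c\<bar> * d"
    using r d by (intro mult_right_mono mult_left_mono) auto
  moreover have "d\<^sup>2 * y\<^sup>2 / g + 2 * r * (c - s * y) * d - (2 * r * c * d - r\<^sup>2 * s\<^sup>2 * g) = (d * y - r * s * g)\<^sup>2 / g"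
    using g by (simp add: field_simps power2_eq_square)
  moreover have "0 \<le> (d * y - r * s * g)\<^sup>2 / g" using g by simp
  ultimately show ?thesis using True by (simp add: holevo_excess_def)
next
  case False
  show ?thesis
  proof (cases "s = 0")
    case True
    then show ?thesis using False g r d by (simp add: holevo_excess_def)
  next
    case s_pos: False
    have "d\<^sup>2 * c\<^sup>2 \<le> d\<^sup>2 * (s * y)\<^sup>2 + 2 * r * d * g * s\<^sup>2 * \<bar>s * y - c\<bar>"
      using kink_inequality[OF g d r c] False by simp
    also have "\<dots> = g * s\<^sup>2 * (d\<^sup>2 * y\<^sup>2 / g + 2 * r * \<bar>s * y - c\<bar> * d)"
      using g by (simp add: field_simps power2_eq_square)
    finally have "d\<^sup>2 * c\<^sup>2 / (g * s\<^sup>2) \<le> d\<^sup>2 * y\<^sup>2 / g + 2 * r * \<bar>s * y - c\<bar> * d"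
      using g s_pos by (simp add: pos_divide_le_eq mult.commute)
    then show ?thesis using False by (simp add: holevo_excess_def power_divide)
  qed
qed

lemma holevo_excess_attained:
  assumes g: "0 < g" and d: "0 < d" and c: "0 \<le> c"
  shows "\<exists>y. d\<^sup>2 * y\<^sup>2 / g + 2 * r * \<bar>s * y - c\<bar> * d = holevo_excess r g d c s"
proof (cases "r * g * s\<^sup>2 < d * c")
  case True
  define y where "y = r * s * g / d"
  have "s * y < c" using True d by (simp add: y_def power2_eq_square field_simps)
  then have "d\<^sup>2 * y\<^sup>2 / g + 2 * r * \<bar>s * y - c\<bar> * d = 2 * r * c * d - r\<^sup>2 * s\<^sup>2 * g"
    using g d by (simp add: y_def power2_eq_square field_simps)
  then show ?thesis using True by (auto simp: holevo_excess_def)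
next
  case False
  have "c = 0" if "s = 0" using False that c d by (auto simp: zero_less_mult_iff)
  then have "s * (c / s) = c" by (cases "s = 0") auto
  then have "d\<^sup>2 * (c / s)\<^sup>2 / g + 2 * r * \<bar>s * (c / s) - c\<bar> * d = d\<^sup>2 / g * (c / s)\<^sup>2" by simp
  moreover have "holevo_excess r g d c s = d\<^sup>2 / g * (c / s)\<^sup>2" using False by (simp add: holevo_excess_def)
  ultimately show ?thesis by metis
qed

lemma is_holevo_bound_qubit:
  assumes G: "rpd G" and r: "0 \<le> r" "r < 1" and c: "0 \<le> c" and s: "0 \<le> s" and cs: "c\<^sup>2 + s\<^sup>2 = 1"
    and D: "D 1 = sigma 1" "D 2 = c *\<^sub>R sigma 2 + (s * sqrt (1 - r\<^sup>2)) *\<^sub>R sigma 3"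
  shows "is_holevo_bound r D G (G$1$1 + G$2$2 + holevo_excess r (G$1$1) (sqrt (det G)) c s)"
proof -
  let ?g = "G$1$1" and ?d = "sqrt (det G)"
  have Gpsd: "rpsd G" using G by (rule rpd_imp_rpsd)
  have g: "0 < ?g" and d: "0 < ?d" and d2: "?d\<^sup>2 = det G" using rpd_2_entries[OF G] by auto
  note complete_square = qform_2_complete_square[OF rpsd_2_entries(1)[OF Gpsd]]
  have qform_ge: "?d\<^sup>2 * (x 2)\<^sup>2 / ?g \<le> qform G x" for x
    using complete_square[of x] g d2 by (simp add: divide_le_eq mult.commute)
  have "\<exists>X. admissible D X \<and> holevoC r G X = ?g + G$2$2 + holevo_excess r ?g ?d c s"
  proof -
    obtain y where y: "?d\<^sup>2 * y\<^sup>2 / ?g + 2 * r * \<bar>s * y - c\<bar> * ?d = holevo_excess r ?g ?d c s"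
      using holevo_excess_attained[OF g d c] by blast
    define B where "B = (\<lambda>j::2. if j = 1 then - G$1$2 * y / ?g else y)"
    have "?g * qform G B = ?d\<^sup>2 * y\<^sup>2" using complete_square[of B] g d2 by (simp add: B_def)
    then have "qform G B = ?d\<^sup>2 * y\<^sup>2 / ?g" using g by (simp add: eq_divide_eq mult.commute)
    with y show ?thesis using holevoC_attains[OF Gpsd r cs D, of B] by (auto simp: B_def)
  qed
  moreover have "?g + G$2$2 + holevo_excess r ?g ?d c s \<le> holevoC r G X" if adm: "admissible D X" for X
  proof -
    obtain m B where "holevoC r G X = ?g + G$2$2 + qform G m + qform G B + 2 * r * \<bar>s * B 2 - c\<bar> * ?d"
      using holevoC_admissible[OF Gpsd r cs D adm] by blast
    then show ?thesis
      using qform_nonneg[OF Gpsd, of m] qform_ge[of B] holevo_excess_le[OF g d r(1) c s, of "B 2"] by linarith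
  qed
  ultimately show ?thesis unfolding is_holevo_bound_def by blast
qed

theorem mainTheorem10:
  fixes r \<phi> g1 g2 g3 :: real
    and \<theta> :: "real^2 \<Rightarrow> real^3" and H :: "(real^2) set" and \<eta>0 :: "real^2"
    and D\<rho> :: "real^2 \<Rightarrow> cmat"
  assumes r: "0 < r" "r < 1"
    and \<phi>: "0 \<le> \<phi>" "\<phi> \<le> pi/2"
    and H: "open H" "\<eta>0 \<in> H" "\<forall>\<eta>\<in>H. norm (\<theta> \<eta>) < 1"
    and smooth: "\<theta> differentiable_on H"
    and at0: "\<theta> \<eta>0 = vector [0, 0, r]"
    and deriv: "((\<lambda>\<eta>. rho (\<theta> \<eta>)) has_derivative D\<rho>) (at \<eta>0)"
    and D1: "D\<rho> (axis 1 1) = sigma 1"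
    and D2: "D\<rho> (axis 2 1) = cos \<phi> *\<^sub>R sigma 2 + (sin \<phi> * sqrt (1 - r\<^sup>2)) *\<^sub>R sigma 3"
    and G: "G = vector [vector [g1, g2], vector [g2, g3]]"
    and Gpd: "rpd G"
  shows "is_holevo_bound r (\<lambda>k. D\<rho> (axis k 1)) G
           (if r * g1 * (sin \<phi>)\<^sup>2 < sqrt (det G) * cos \<phi>
            then trace G + 2 * r * cos \<phi> * sqrt (det G) - r\<^sup>2 * (sin \<phi>)\<^sup>2 * g1
            else trace G + det G / g1 * (cos \<phi> / sin \<phi>)\<^sup>2)"
proof -
  \<comment> \<open>The bound depends on the submodel only through D_1 and D_2 (Zmat already evaluates
    at rho (0, 0, r)).\<close>
  have c: "0 \<le> cos \<phi>" using \<phi> by (intro cos_ge_zero) auto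
  have s: "0 \<le> sin \<phi>" using \<phi> by (intro sin_ge_zero) auto
  have "0 \<le> det G" using rpd_2_entries(2)[OF Gpd] by simp
  then have closed_form:
    "(if r * g1 * (sin \<phi>)\<^sup>2 < sqrt (det G) * cos \<phi>
      then trace G + 2 * r * cos \<phi> * sqrt (det G) - r\<^sup>2 * (sin \<phi>)\<^sup>2 * g1
      else trace G + det G / g1 * (cos \<phi> / sin \<phi>)\<^sup>2)
     = G$1$1 + G$2$2 + holevo_excess r (G$1$1) (sqrt (det G)) (cos \<phi>) (sin \<phi>)"
    using G by (simp add: holevo_excess_def trace_2)
  show ?thesis unfolding closed_form
    by (rule is_holevo_bound_qubit) (use Gpd r c s D1 D2 in auto)
qed

end
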